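(* Let $S$ and $T$ be semigroups such that for each $b\in T$ there exist $a\in S$ and a homomorphism $\phi:S\to T$ with $a\phi=b$ and $\mathbf{r}_S(a)\phi=\mathbf{r}_T(b)$, where $\mathbf{r}_S(a)\phi=\{(s\phi,t\phi)\mid (s,t)\in\mathbf{r}_S(a)\}$. If $S$ is finitely right equated then so is $T$.
   Context: For a semigroup $S$ and $a\in S$, $\mathbf{r}_S(a)=\{(s,t)\in S\times S\mid as=at\}$; $S$ is finitely right equated if each $\mathbf{r}_S(a)$ is finitely generated as a right congruence. *)

theory Defs
  imports Main
begin

text \<open>Semigroups are modelled as types of class semigroup_mult (the whole type is the semigroup).\<close>

definition sg_hom :: "('a::semigroup_mult \<Rightarrow> 'b::semigroup_mult) \<Rightarrow> bool" where
  "sg_hom \<phi> \<longleftrightarrow> (\<forall>x y. \<phi> (x * y) = \<phi> x * \<phi> y)"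

definition right_congruence :: "('a::semigroup_mult \<times> 'a) set \<Rightarrow> bool" where
  "right_congruence \<rho> \<longleftrightarrow> equiv UNIV \<rho> \<and> (\<forall>s t u. (s, t) \<in> \<rho> \<longrightarrow> (s * u, t * u) \<in> \<rho>)"

definition rcong_gen :: "('a::semigroup_mult \<times> 'a) set \<Rightarrow> ('a \<times> 'a) set" where
  "rcong_gen X = \<Inter> {\<rho>. right_congruence \<rho> \<and> X \<subseteq> \<rho>}"

definition fg_right_congruence :: "('a::semigroup_mult \<times> 'a) set \<Rightarrow> bool" where
  "fg_right_congruence \<rho> \<longleftrightarrow> right_congruence \<rho> \<and> (\<exists>X. finite X \<and> rcong_gen X = \<rho>)"

definition r_ann :: "'a::semigroup_mult \<Rightarrow> ('a \<times> 'a) set" where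
  "r_ann a = {(s, t). a * s = a * t}"

definition finitely_right_equated :: "'a::semigroup_mult itself \<Rightarrow> bool" where
  "finitely_right_equated _ \<longleftrightarrow> (\<forall>a::'a. fg_right_congruence (r_ann a))"

end

theory Submission
  imports Defs
begin

text \<open>If a homomorphism maps a finitely generated right congruence onto a right congruence,
  the images of the finitely many generators generate the latter: one inclusion by leastness,
  the other because the preimage of the congruence they generate is a right congruence containing
  the original generators.\<close>

lemma right_congruence_iff:
  "right_congruence \<rho> \<longleftrightarrow>
     (\<forall>x. (x, x) \<in> \<rho>) \<and> (\<forall>x y. (x, y) \<in> \<rho> \<longrightarrow> (y, x) \<in> \<rho>) \<and>
     (\<forall>x y z. (x, y) \<in> \<rho> \<longrightarrow> (y, z) \<in> \<rho> \<longrightarrow> (x, z) \<in> \<rho>) \<and>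
     (\<forall>s t u. (s, t) \<in> \<rho> \<longrightarrow> (s * u, t * u) \<in> \<rho>)"
  unfolding right_congruence_def equiv_def refl_on_def sym_def trans_def by auto

lemma right_congruence_Inter:
  assumes "\<And>\<rho>. \<rho> \<in> R \<Longrightarrow> right_congruence \<rho>"
  shows "right_congruence (\<Inter>R)"
  using assms unfolding right_congruence_iff Inter_iff by meson

lemma right_congruence_rcong_gen: "right_congruence (rcong_gen X)"
  unfolding rcong_gen_def by (rule right_congruence_Inter) blast

lemma rcong_gen_least: "right_congruence \<rho> \<Longrightarrow> X \<subseteq> \<rho> \<Longrightarrow> rcong_gen X \<subseteq> \<rho>"
  unfolding rcong_gen_def by blast

lemma rcong_gen_superset: "X \<subseteq> rcong_gen X"
  unfolding rcong_gen_def by blast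

lemma right_congruence_r_ann: "right_congruence (r_ann a)"
  unfolding right_congruence_iff r_ann_def by (auto simp: mult.assoc[symmetric])

lemma right_congruence_vimage:
  assumes "sg_hom \<phi>" and "right_congruence \<rho>"
  shows "right_congruence (map_prod \<phi> \<phi> -` \<rho>)"
proof -
  have "\<phi> (x * y) = \<phi> x * \<phi> y" for x y
    using assms(1) unfolding sg_hom_def by blast
  with assms(2) show ?thesis
    unfolding right_congruence_iff vimage_eq map_prod_simp by metis
qed

lemma fg_right_congruence_image:
  fixes \<phi> :: "'a::semigroup_mult \<Rightarrow> 'b::semigroup_mult"
  assumes hom: "sg_hom \<phi>" and fg: "fg_right_congruence \<rho>"
    and \<sigma>: "right_congruence \<sigma>" and image: "map_prod \<phi> \<phi> ` \<rho> = \<sigma>"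
  shows "fg_right_congruence \<sigma>"
proof -
  obtain X where "finite X" and X: "rcong_gen X = \<rho>"
    using fg unfolding fg_right_congruence_def by blast
  let ?Y = "map_prod \<phi> \<phi> ` X"
  have "?Y \<subseteq> \<sigma>"
    using rcong_gen_superset[of X] X image by blast
  then have "rcong_gen ?Y \<subseteq> \<sigma>"
    by (rule rcong_gen_least[OF \<sigma>])
  moreover have "\<rho> \<subseteq> map_prod \<phi> \<phi> -` rcong_gen ?Y"
    unfolding X[symmetric]
    by (rule rcong_gen_least[OF right_congruence_vimage[OF hom right_congruence_rcong_gen]])
      (use rcong_gen_superset[of ?Y] in auto)
  then have "\<sigma> \<subseteq> rcong_gen ?Y"
    unfolding image[symmetric] by (simp add: image_subset_iff_subset_vimage)
  ultimately have "rcong_gen ?Y = \<sigma>" by blast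
  with \<open>finite X\<close> \<sigma> show ?thesis
    unfolding fg_right_congruence_def by blast
qed

theorem mainTheorem15:
  assumes "\<forall>b::'b::semigroup_mult. \<exists>(a::'a::semigroup_mult) \<phi>. sg_hom \<phi> \<and> \<phi> a = b \<and>
             (\<lambda>(s, t). (\<phi> s, \<phi> t)) ` r_ann a = r_ann b"
    and "finitely_right_equated TYPE('a)"
  shows "finitely_right_equated TYPE('b)"
  unfolding finitely_right_equated_def
proof
  fix b :: 'b
  obtain a :: 'a and \<phi> where hom: "sg_hom \<phi>" and image: "map_prod \<phi> \<phi> ` r_ann a = r_ann b"
    using assms(1) unfolding map_prod_def by blast
  have "fg_right_congruence (r_ann a)"
    using assms(2) unfolding finitely_right_equated_def by blast
  then show "fg_right_congruence (r_ann b)"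
    by (rule fg_right_congruence_image[OF hom _ right_congruence_r_ann image])
qed

end
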